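(* Let $M_1>0$, $M_2>0$. Let $F(z)=\bar{z}G(z)+H(z)$, $z\in\mathbb{D}$, where $G,H$ are analytic in $\mathbb{D}$ with $G(0)=H(0)=0$, $G'(0)=H'(0)=1$, $|G(z)|\leq M_1$ and $|H(z)|\leq M_2$ for all $z\in\mathbb{D}$. Let $\rho_3$ be the unique root in $(0,1)$ of the equation $$1-\Big(M_2-\frac{1}{M_2}\Big)\frac{2r-r^2}{(1-r)^2}-\Big(M_1-\frac{1}{M_1}\Big)\frac{(3-2r)r^2}{(1-r)^2}-2r=0,$$ and $$\sigma_3=\rho_3-\rho_3^2-\Big(M_2-\frac{1}{M_2}\Big)\frac{\rho_3^2}{1-\rho_3}-\Big(M_1-\frac{1}{M_1}\Big)\frac{\rho_3^3}{1-\rho_3}.$$ Then $F$ is univalent in $\mathbb{D}_{\rho_3}$ and $F(\mathbb{D}_{\rho_3})\supseteq\mathbb{D}_{\sigma_3}$.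
   Context: $\mathbb{D}=\{z:|z|<1\}$ and $\mathbb{D}_r=\{z\in\mathbb{C}:|z|<r\}$. *)

theory Defs
  imports "HOL-Analysis.Analysis"
begin

end

(*
  Write G(z) = z + a_2 z^2 + ... .  The bound |G| <= M forces |a_n| <= M - 1/M: averaging G over
  the (n-1)-th roots of unity leaves z + a_n z^n + ..., and a Schwarz-lemma argument applied to a
  Moebius transform of G(z)/(Mz) bounds this first coefficient after the gap.  Summing the
  resulting geometric series bounds |H' - 1|, |G'| and |G| on the disc of radius rho3, so that in
  F(z2) - F(z1) = (z2 - z1) + ... the remaining terms are dominated by |z2 - z1|; hence F is
  injective there.  On the circle |z| = rho3 the same estimates give |F(z)| >= sigma3, and since the
  image of the open disc is open by invariance of domain, connectedness of the disc of radius
  sigma3 shows that it lies in the image.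
*)
theory Submission
  imports Defs "HOL-Complex_Analysis.Complex_Analysis"
begin

definition taylor_coeff :: "(complex \<Rightarrow> complex) \<Rightarrow> nat \<Rightarrow> complex" where
  "taylor_coeff f n = (deriv ^^ n) f 0 / fact n"

lemma taylor_coeff_0 [simp]: "taylor_coeff f 0 = f 0"
  and taylor_coeff_Suc_0 [simp]: "taylor_coeff f (Suc 0) = deriv f 0"
  by (simp_all add: taylor_coeff_def)

lemma sums_taylor_coeff:
  assumes "f holomorphic_on ball 0 r" and "z \<in> ball 0 r"
  shows "(\<lambda>n. taylor_coeff f n * z ^ n) sums f z"
  using holomorphic_power_series[OF assms] by (simp add: taylor_coeff_def)

lemma taylor_coeff_deriv: "taylor_coeff (deriv f) m = of_nat (Suc m) * taylor_coeff f (Suc m)"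
  unfolding taylor_coeff_def funpow_Suc_right o_def
  by (simp add: divide_simps del: of_nat_Suc)

lemma norm_deriv_0_le_bound:
  assumes holf: "f holomorphic_on ball 0 1" and bound: "\<And>z. z \<in> ball 0 1 \<Longrightarrow> norm (f z) \<le> M"
  shows "norm (deriv f 0) \<le> M"
proof (rule field_le_mult_one_interval)
  fix s :: real assume s: "0 < s" "s < 1"
  have "norm ((deriv ^^ 1) f 0) \<le> fact 1 * M / s ^ 1"
  proof (rule Cauchy_inequality)
    show "f holomorphic_on ball 0 s" "continuous_on (cball 0 s) f"
      using s by (auto intro!: holomorphic_on_subset[OF holf] holomorphic_on_imp_continuous_on)
    show "norm (f x) \<le> M" if "norm (0 - x) = s" for x
      using that s by (intro bound) auto
  qed (use s in auto)
  then show "s * norm (deriv f 0) \<le> M"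
    using s by (simp add: field_simps)
qed

lemma norm_scaled_diff_one_le:
  fixes w :: complex and M :: real
  assumes "norm w \<le> M" and "M \<ge> 1"
  shows "M * norm (w - 1) \<le> norm (of_real (M^2) - w)"
proof -
  have "norm (of_real (M^2) - w) ^ 2 - (M * norm (w - 1)) ^ 2 = (M^2 - 1) * (M^2 - norm w ^ 2)"
    unfolding power_mult_distrib cmod_power2 by (simp add: power2_eq_square algebra_simps)
  also have "\<dots> \<ge> 0"
    using assms by (intro mult_nonneg_nonneg) (auto simp: power_mono one_le_power)
  finally show ?thesis
    using assms by (simp add: power2_le_iff_abs_le)
qed

lemma Schwarz_Lemma_scaled:
  fixes g :: "complex \<Rightarrow> complex"
  assumes "g holomorphic_on ball 0 1" and "g 0 = 0"
    and bound: "\<And>z. z \<in> ball 0 1 \<Longrightarrow> norm (g z) < M" and z: "z \<in> ball 0 1"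
  shows "norm (g z) \<le> M * norm z"
proof -
  have "M > 0"
    using bound[of 0] \<open>g 0 = 0\<close> by simp
  have "norm (g z / M) \<le> norm z"
    using assms \<open>M > 0\<close>
    by (intro Schwarz_Lemma(1)[of "\<lambda>z. g z / M"])
      (auto intro!: holomorphic_intros simp: norm_divide)
  then show ?thesis
    using \<open>M > 0\<close> by (simp add: norm_divide field_simps)
qed

lemma norm_at_0_le_1_of_power_mult_bounded:
  fixes v :: "complex \<Rightarrow> complex"
  assumes holv: "v holomorphic_on ball 0 1"
    and bound: "\<And>z. z \<in> ball 0 1 \<Longrightarrow> norm (z ^ k * v z) \<le> 1"
  shows "norm (v 0) \<le> 1"
proof (rule tendsto_upperbound)
  show "((\<lambda>s. norm (v 0) * s ^ k) \<longlongrightarrow> norm (v 0)) (at_left 1)"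
    by (auto intro!: tendsto_eq_intros)
  have bound_s: "norm (v 0) * s ^ k \<le> 1" if s: "0 < s" "s < 1" for s :: real
  proof -
    have "norm ((deriv ^^ 0) v 0) \<le> fact 0 * (1 / s ^ k) / s ^ 0"
    proof (rule Cauchy_inequality)
      show "v holomorphic_on ball 0 s" "continuous_on (cball 0 s) v"
        using s by (auto intro!: holomorphic_on_subset[OF holv] holomorphic_on_imp_continuous_on)
      show "norm (v x) \<le> 1 / s ^ k" if "norm (0 - x) = s" for x
        using bound[of x] that s by (simp add: norm_mult norm_power field_simps)
    qed (use s in auto)
    then show ?thesis using s by (simp add: field_simps)
  qed
  have "\<forall>\<^sub>F s in at_left 1. s \<in> {0<..<1::real}"
    by (rule eventually_at_left_real) simp
  then show "\<forall>\<^sub>F s in at_left 1. norm (v 0) * s ^ k \<le> 1"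
    by (rule eventually_mono) (auto intro: bound_s)
qed simp

lemma holomorphic_power_series_quotient:
  fixes f :: "complex \<Rightarrow> complex"
  assumes holf: "f holomorphic_on ball 0 r"
    and ser: "\<And>z. z \<in> ball 0 r \<Longrightarrow> (\<lambda>m. c m * z ^ m) sums f z"
  obtains p where "p holomorphic_on ball 0 r" and "p 0 = c n"
    and "\<And>z. z \<in> ball 0 r \<Longrightarrow> f z = (\<Sum>m<n. c m * z ^ m) + z ^ n * p z"
proof -
  define p where "p z = (if z = 0 then c n else (f z - (\<Sum>m<n. c m * z ^ m)) / z ^ n)" for z
  have pser: "(\<lambda>m. c (m + n) * z ^ m) sums p z" if z: "z \<in> ball 0 r" "z \<noteq> 0" for z
  proof -
    have "(\<lambda>m. c (m + n) * z ^ (m + n)) sums (f z - (\<Sum>m<n. c m * z ^ m))"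
      by (rule sums_split_initial_segment[OF ser[OF z(1)]])
    then have "(\<lambda>m. c (m + n) * z ^ (m + n) / z ^ n) sums p z"
      using z(2) unfolding p_def by (auto intro: sums_divide)
    then show ?thesis using z(2) by (simp add: power_add)
  qed
  have "p holomorphic_on ball 0 r"
  proof (cases "r > 0")
    case True
    have lim: "(p \<longlongrightarrow> p 0) (at 0)"
      using powser_limit_0_strong[OF True, of "\<lambda>m. c (m + n)" p] pser by (simp add: p_def)
    have "(\<lambda>z. (f z - (\<Sum>m<n. c m * z ^ m)) / z ^ n) holomorphic_on ball 0 r - {0}"
      by (intro holomorphic_intros holomorphic_on_subset[OF holf]) auto
    then have holp: "p holomorphic_on ball 0 r - {0}"
      by (rule holomorphic_transform) (auto simp: p_def)
    have "(p \<longlongrightarrow> p z) (at z within ball 0 r)" if "z \<in> {0}" for z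
      using tendsto_within_subset[OF lim, of "ball 0 r"] that by simp
    then show ?thesis
      by (rule no_isolated_singularity'[OF _ holp]) auto
  qed (simp add: ball_empty holomorphic_on_def)
  moreover have "p 0 = c n" by (simp add: p_def)
  moreover have "f z = (\<Sum>m<n. c m * z ^ m) + z ^ n * p z" if "z \<in> ball 0 r" for z
  proof (cases "z = 0")
    case True
    have "f 0 = c 0"
      using sums_unique2[OF ser[OF that[unfolded True]] powser_sums_zero[of c]] .
    then show ?thesis
      using True by (cases n) (simp_all add: p_def)
  qed (simp add: p_def)
  ultimately show ?thesis by (rule that)
qed

text \<open>With \<open>u z = 1 + z ^ k * p z\<close>, the function \<open>z ^ k * v z = M (u z - 1) / (M\<^sup>2 - u z)\<close>
  is a disc automorphism applied to \<open>u / M\<close>, hence bounded by 1.\<close>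

lemma norm_coeff_le_of_norm_le:
  fixes p :: "complex \<Rightarrow> complex" and M :: real
  assumes holp: "p holomorphic_on ball 0 1" and M: "M > 1" and k: "k \<ge> 1"
    and bound: "\<And>z. z \<in> ball 0 1 \<Longrightarrow> norm (1 + z ^ k * p z) \<le> M"
  shows "norm (p 0) \<le> M - 1 / M"
proof -
  define u where "u z = 1 + z ^ k * p z" for z
  have denom_nz: "of_real (M^2) - u z \<noteq> 0" if "z \<in> ball 0 1" for z
  proof
    assume "of_real (M^2) - u z = 0"
    then have "u z = of_real (M^2)"
      by simp
    then have "norm (u z) = M^2"
      by (simp only: norm_of_real abs_power2)
    with bound[OF that] M show False
      by (simp add: u_def power2_eq_square)
  qed
  define v where "v z = of_real M * p z / (of_real (M^2) - u z)" for z
  have "v holomorphic_on ball 0 1"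
    unfolding v_def u_def using denom_nz holp by (intro holomorphic_intros) (auto simp: u_def)
  moreover have "norm (z ^ k * v z) \<le> 1" if z: "z \<in> ball 0 1" for z
  proof -
    have "z ^ k * v z = of_real M * (u z - 1) / (of_real (M^2) - u z)"
      by (simp add: v_def u_def)
    then have "norm (z ^ k * v z) = M * norm (u z - 1) / norm (of_real (M^2) - u z)"
      using M by (simp only: norm_divide norm_mult norm_of_real abs_of_pos)
    then show ?thesis
      using norm_scaled_diff_one_le[OF bound[OF z, folded u_def]] M denom_nz[OF z]
      by (simp add: divide_le_eq_1_pos)
  qed
  ultimately have "norm (v 0) \<le> 1"
    by (rule norm_at_0_le_1_of_power_mult_bounded)
  moreover have "v 0 = of_real M * p 0 / of_real (M^2 - 1)"
    using k by (simp add: v_def u_def)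
  moreover have "M^2 - 1 > 0"
    using M by (simp add: power2_eq_square less_1_mult)
  ultimately have "M * norm (p 0) / (M^2 - 1) \<le> 1"
    using M by (simp only: norm_divide norm_mult norm_of_real abs_of_pos)
  then have "M * norm (p 0) \<le> M^2 - 1"
    using \<open>M^2 - 1 > 0\<close> by (simp add: divide_le_eq_1_pos)
  then show ?thesis
    using M by (simp add: field_simps power2_eq_square)
qed

lemma norm_coeff_le_of_gap:
  fixes g p :: "complex \<Rightarrow> complex" and M :: real
  assumes holg: "g holomorphic_on ball 0 1" and holp: "p holomorphic_on ball 0 1"
    and M: "M > 1" and k: "k \<ge> 1"
    and bound: "\<And>z. z \<in> ball 0 1 \<Longrightarrow> norm (g z) < M"
    and gap: "\<And>z. z \<in> ball 0 1 \<Longrightarrow> g z = z + z ^ (k + 1) * p z"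
  shows "norm (p 0) \<le> M - 1 / M"
proof (rule norm_coeff_le_of_norm_le[OF holp M k])
  fix z :: complex assume z: "z \<in> ball 0 1"
  show "norm (1 + z ^ k * p z) \<le> M"
  proof (cases "z = 0")
    case False
    have "norm (z * (1 + z ^ k * p z)) \<le> M * norm z"
      using Schwarz_Lemma_scaled[OF holg _ bound z] gap[OF z] gap[of 0]
      by (simp add: algebra_simps)
    then show ?thesis
      using False by (simp add: norm_mult)
  qed (use M k in \<open>simp add: power_0_left\<close>)
qed

lemma cis_power_eq_1_iff:
  fixes k d :: nat
  assumes "k \<ge> 1"
  shows "cis (2 * pi / k) ^ d = 1 \<longleftrightarrow> k dvd d"
proof -
  have "real d = real k * real (d div k) + real (d mod k)"
    by (simp flip: of_nat_mult of_nat_add)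
  then have "real d * (2 * pi / k) = 2 * pi * real (d div k) + 2 * pi * real (d mod k) / real k"
    using assms by (simp add: field_simps)
  then have "cis (2 * pi / k) ^ d
      = cis (2 * pi * real (d div k)) * cis (2 * pi * real (d mod k) / real k)"
    by (simp only: Complex.DeMoivre cis_mult)
  also have "\<dots> = cis (2 * pi * real (d mod k) / real k)"
    by (simp only: cis_multiple_2pi Ints_of_nat mult_1)
  finally have "cis (2 * pi / k) ^ d = 1 \<longleftrightarrow>
      cis (2 * pi * real (d mod k) / real k) = cis (2 * pi * real 0 / real k)"
    by simp
  also have "\<dots> \<longleftrightarrow> d mod k = 0"
    using Complex.bij_betw_roots_unity[of k] assms
    by (intro inj_on_eq_iff[of "\<lambda>j. cis (2 * pi * real j / real k)" "{..<k}"])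
      (auto dest: bij_betw_imp_inj_on)
  finally show ?thesis
    by (simp add: dvd_eq_mod_eq_0)
qed

lemma sum_cis_powers:
  fixes k d :: nat
  assumes "k \<ge> 1"
  shows "(\<Sum>j<k. cis (2 * pi / k) ^ (j * d)) = (if k dvd d then of_nat k else 0)"
proof -
  define \<omega> where "\<omega> = cis (2 * pi / k) ^ d"
  have "\<omega> ^ k = (cis (2 * pi / k) ^ k) ^ d"
    unfolding \<omega>_def by (simp only: power_mult[symmetric] mult.commute)
  also have "\<dots> = 1"
    using cis_power_eq_1_iff[OF assms, of k] by simp
  finally have "\<omega> ^ k = 1" .
  moreover have "\<omega> = 1 \<longleftrightarrow> k dvd d"
    unfolding \<omega>_def by (rule cis_power_eq_1_iff[OF assms])
  moreover have "(\<Sum>j<k. cis (2 * pi / k) ^ (j * d)) = (\<Sum>j<k. \<omega> ^ j)"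
    by (simp add: \<omega>_def mult.commute[of _ d] power_mult)
  ultimately show ?thesis
    by (cases "k dvd d") (simp_all add: geometric_sum)
qed

text \<open>The weight \<open>\<epsilon> ^ (j * (k - 1))\<close> equals \<open>\<epsilon> ^ (- j)\<close>, so averaging keeps exactly the Taylor
  coefficients whose index is \<open>1\<close> modulo \<open>k\<close>.\<close>

definition rotation_average :: "nat \<Rightarrow> (complex \<Rightarrow> complex) \<Rightarrow> complex \<Rightarrow> complex" where
  "rotation_average k f z =
     (\<Sum>j<k. cis (2 * pi / k) ^ (j * (k - 1)) * f (cis (2 * pi / k) ^ j * z)) / of_nat k"

lemma holomorphic_on_rotation_average:
  assumes "f holomorphic_on ball 0 r"
  shows "rotation_average k f holomorphic_on ball 0 r"
proof -
  have "(\<lambda>z. f (cis (2 * pi / k) ^ j * z)) holomorphic_on ball 0 r" for j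
    by (rule holomorphic_on_compose_gen[OF _ assms, unfolded o_def])
      (auto intro!: holomorphic_intros simp: norm_mult norm_power)
  then show ?thesis
    unfolding rotation_average_def by (intro holomorphic_intros) auto
qed

lemma norm_rotation_average_less:
  assumes "k \<ge> 1" and bound: "\<And>w. w \<in> ball 0 r \<Longrightarrow> norm (f w) < M" and z: "z \<in> ball 0 r"
  shows "norm (rotation_average k f z) < M"
proof -
  have "norm (\<Sum>j<k. cis (2 * pi / k) ^ (j * (k - 1)) * f (cis (2 * pi / k) ^ j * z))
        \<le> (\<Sum>j<k. norm (f (cis (2 * pi / k) ^ j * z)))"
    by (rule order_trans[OF norm_sum]) (simp add: norm_mult norm_power)
  also have "\<dots> < (\<Sum>j<k. M)"
    using assms by (intro sum_strict_mono) (auto simp: norm_mult norm_power lessThan_empty_iff)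
  finally show ?thesis
    using assms by (simp add: rotation_average_def norm_divide field_simps)
qed

lemma sums_rotation_average:
  assumes k: "k \<ge> 1" and ser: "\<And>w. w \<in> ball 0 r \<Longrightarrow> (\<lambda>m. a m * w ^ m) sums f w"
    and z: "z \<in> ball 0 r"
  shows "(\<lambda>m. (if k dvd m + k - 1 then a m else 0) * z ^ m) sums rotation_average k f z"
proof -
  define \<epsilon> where "\<epsilon> = cis (2 * pi / k)"
  have "(\<lambda>m. \<Sum>j<k. \<epsilon> ^ (j * (k - 1)) * (a m * (\<epsilon> ^ j * z) ^ m))
          sums (\<Sum>j<k. \<epsilon> ^ (j * (k - 1)) * f (\<epsilon> ^ j * z))"
    using z by (intro sums_sum sums_mult ser) (simp add: \<epsilon>_def norm_mult norm_power)
  then have "(\<lambda>m. (\<Sum>j<k. \<epsilon> ^ (j * (k - 1)) * (a m * (\<epsilon> ^ j * z) ^ m)) / of_nat k)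
               sums rotation_average k f z"
    unfolding rotation_average_def \<epsilon>_def by (rule sums_divide)
  moreover have "(\<Sum>j<k. \<epsilon> ^ (j * (k - 1)) * (a m * (\<epsilon> ^ j * z) ^ m)) / of_nat k
                   = (if k dvd m + k - 1 then a m else 0) * z ^ m" for m
  proof -
    have "\<epsilon> ^ (j * (k - 1)) * (\<epsilon> ^ j) ^ m = \<epsilon> ^ (j * (m + k - 1))" for j
      using k by (simp add: algebra_simps flip: power_add power_mult)
    then have "(\<Sum>j<k. \<epsilon> ^ (j * (k - 1)) * (a m * (\<epsilon> ^ j * z) ^ m))
                 = a m * z ^ m * (\<Sum>j<k. \<epsilon> ^ (j * (m + k - 1)))"
      by (simp add: sum_distrib_left power_mult_distrib mult_ac)
    then show ?thesis
      using k by (simp add: \<epsilon>_def sum_cis_powers)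
  qed
  ultimately show ?thesis by simp
qed

lemma norm_taylor_coeff_le_of_norm_less:
  assumes holf: "f holomorphic_on ball 0 1" and f0: "f 0 = 0" and df0: "deriv f 0 = 1"
    and bound: "\<And>z. z \<in> ball 0 1 \<Longrightarrow> norm (f z) < M" and M: "M > 1" and n: "n \<ge> 2"
  shows "norm (taylor_coeff f n) \<le> M - 1 / M"
proof -
  define k where "k = n - 1"
  have k: "k \<ge> 1" "n = k + 1"
    using n by (auto simp: k_def)
  define c where "c m = (if k dvd m + k - 1 then taylor_coeff f m else 0)" for m
  have holg: "rotation_average k f holomorphic_on ball 0 1"
    by (rule holomorphic_on_rotation_average[OF holf])
  have ser: "(\<lambda>m. c m * z ^ m) sums rotation_average k f z" if "z \<in> ball 0 1" for z
    unfolding c_def by (rule sums_rotation_average[OF k(1) sums_taylor_coeff[OF holf] that])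
  obtain p where holp: "p holomorphic_on ball 0 1" and p0: "p 0 = c n"
    and split: "\<And>z. z \<in> ball 0 1 \<Longrightarrow> rotation_average k f z = (\<Sum>m<n. c m * z ^ m) + z ^ n * p z"
    using holomorphic_power_series_quotient[OF holg ser, where n = n] by blast
  have "c m = 0" if "2 \<le> m" "m < n" for m
  proof -
    have "\<not> k dvd m - 1"
      using that k dvd_imp_le[of k "m - 1"] by auto
    moreover have "m + k - 1 = (m - 1) + k"
      using that by simp
    ultimately have "\<not> k dvd m + k - 1"
      by simp
    then show ?thesis by (simp add: c_def)
  qed
  then have "c m * z ^ m = (if m = 1 then z else 0)" if "m < n" for m z
    using that k f0 df0 by (cases "m = 0 \<or> m = 1") (auto simp: c_def)
  then have "(\<Sum>m<n. c m * z ^ m) = z" for z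
    using k by (simp add: sum.delta)
  moreover have "c n = taylor_coeff f n"
    using k by (simp add: c_def)
  ultimately show ?thesis
    using norm_coeff_le_of_gap[OF holg holp M k(1) norm_rotation_average_less[OF k(1) bound]]
      split p0 k(2)
    by simp
qed

lemma norm_taylor_coeff_le:
  assumes holf: "f holomorphic_on ball 0 1" and f0: "f 0 = 0" and df0: "deriv f 0 = 1"
    and bound: "\<And>z. z \<in> ball 0 1 \<Longrightarrow> norm (f z) \<le> M" and n: "n \<ge> 2"
  shows "norm (taylor_coeff f n) \<le> M - 1 / M"
proof (rule tendsto_lowerbound)
  have M: "M \<ge> 1"
    using norm_deriv_0_le_bound[OF holf bound] df0 by simp
  then show "((\<lambda>t. t - 1 / t) \<longlongrightarrow> M - 1 / M) (at_right M)"
    by (auto intro!: tendsto_eq_intros)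
  show "\<forall>\<^sub>F t in at_right M. norm (taylor_coeff f n) \<le> t - 1 / t"
    using eventually_at_right_less[of M]
  proof (rule eventually_mono)
    fix t assume "M < t"
    with M bound show "norm (taylor_coeff f n) \<le> t - 1 / t"
      by (intro norm_taylor_coeff_le_of_norm_less[OF holf f0 df0 _ _ n]) force+
  qed
qed simp

lemma norm_sub_id_le:
  fixes f :: "complex \<Rightarrow> complex"
  assumes holf: "f holomorphic_on ball 0 1" and f0: "f 0 = 0" and df0: "deriv f 0 = 1"
    and coeff: "\<And>n. n \<ge> 2 \<Longrightarrow> norm (taylor_coeff f n) \<le> \<mu>"
    and z: "norm z \<le> r" and r: "r < 1"
  shows "norm (f z - z) \<le> \<mu> * (r^2 / (1 - r))"
proof (rule norm_sums_le)
  have "\<mu> \<ge> 0"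
    using coeff[of 2] by (auto intro: order_trans[OF norm_ge_zero])
  have "(\<lambda>m. taylor_coeff f (m + 2) * z ^ (m + 2)) sums (f z - (\<Sum>m<2. taylor_coeff f m * z ^ m))"
    using z r by (intro sums_split_initial_segment sums_taylor_coeff[OF holf]) auto
  then show "(\<lambda>m. taylor_coeff f (m + 2) * z ^ (m + 2)) sums (f z - z)"
    using f0 df0 by (simp add: numeral_2_eq_2)
  have "(\<lambda>m. \<mu> * r^2 * r ^ m) sums (\<mu> * r^2 * (1 / (1 - r)))"
    using order_trans[OF norm_ge_zero z] r by (intro sums_mult geometric_sums) auto
  then show "(\<lambda>m. \<mu> * r^2 * r ^ m) sums (\<mu> * (r^2 / (1 - r)))"
    by simp
  show "norm (taylor_coeff f (m + 2) * z ^ (m + 2)) \<le> \<mu> * r^2 * r ^ m" for m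
  proof -
    have "norm (taylor_coeff f (m + 2) * z ^ (m + 2))
            = norm (taylor_coeff f (m + 2)) * norm z ^ (m + 2)"
      by (simp add: norm_mult norm_power)
    also have "\<dots> \<le> \<mu> * r ^ (m + 2)"
      using coeff[of "m + 2"] z \<open>\<mu> \<ge> 0\<close> by (intro mult_mono power_mono) auto
    finally show ?thesis
      by (simp add: power_add power2_eq_square mult_ac)
  qed
qed

lemma norm_deriv_sub_1_le:
  fixes f :: "complex \<Rightarrow> complex"
  assumes holf: "f holomorphic_on ball 0 1" and df0: "deriv f 0 = 1"
    and coeff: "\<And>n. n \<ge> 2 \<Longrightarrow> norm (taylor_coeff f n) \<le> \<mu>"
    and z: "norm z \<le> r" and r: "r < 1"
  shows "norm (deriv f z - 1) \<le> \<mu> * (1 / (1 - r)^2 - 1)"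
proof (rule norm_sums_le)
  have "\<mu> \<ge> 0"
    using coeff[of 2] by (auto intro: order_trans[OF norm_ge_zero])
  have "deriv f holomorphic_on ball 0 1"
    by (rule holomorphic_deriv[OF holf]) simp
  from sums_split_initial_segment[OF sums_taylor_coeff[OF this], of z 1]
  show "(\<lambda>m. taylor_coeff (deriv f) (m + 1) * z ^ (m + 1)) sums (deriv f z - 1)"
    using df0 z r by simp
  have "(\<lambda>m. of_nat (Suc (m + 1)) * r ^ (m + 1))
          sums (1 / (1 - r)^2 - (\<Sum>m<1. of_nat (Suc m) * r ^ m))"
    using order_trans[OF norm_ge_zero z] r
    by (intro sums_split_initial_segment geometric_deriv_sums) auto
  then show "(\<lambda>m. \<mu> * (of_nat (Suc (m + 1)) * r ^ (m + 1))) sums (\<mu> * (1 / (1 - r)^2 - 1))"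
    by (intro sums_mult) simp
  show "norm (taylor_coeff (deriv f) (m + 1) * z ^ (m + 1))
          \<le> \<mu> * (of_nat (Suc (m + 1)) * r ^ (m + 1))" for m
  proof -
    have "norm (taylor_coeff (deriv f) (m + 1) * z ^ (m + 1))
            = of_nat (Suc (m + 1)) * (norm (taylor_coeff f (m + 2)) * norm z ^ (m + 1))"
      by (simp only: taylor_coeff_deriv norm_mult norm_power norm_of_nat
          Suc_eq_plus1 add.assoc one_add_one)
    also have "\<dots> \<le> of_nat (Suc (m + 1)) * (\<mu> * r ^ (m + 1))"
      using coeff[of "m + 2"] z \<open>\<mu> \<ge> 0\<close> by (intro mult_left_mono mult_mono power_mono) auto
    finally show ?thesis by (simp only: mult_ac)
  qed
qed

lemma inj_on_cnj_mult_plus: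
  fixes G H :: "complex \<Rightarrow> complex"
  assumes S: "convex S" "open S" and holG: "G holomorphic_on S" and holH: "H holomorphic_on S"
    and norm_le: "\<And>z. z \<in> S \<Longrightarrow> norm z \<le> \<rho>"
    and dH: "\<And>z. z \<in> S \<Longrightarrow> norm (deriv H z - 1) \<le> A"
    and dG: "\<And>z. z \<in> S \<Longrightarrow> norm (deriv G z) \<le> D"
    and G: "\<And>z. z \<in> S \<Longrightarrow> norm (G z) < E"
    and sum_le: "A + \<rho> * D + E \<le> 1"
  shows "inj_on (\<lambda>z. cnj z * G z + H z) S"
proof (rule inj_onI, rule ccontr)
  fix z1 z2 assume z: "z1 \<in> S" "z2 \<in> S" and eq: "cnj z1 * G z1 + H z1 = cnj z2 * G z2 + H z2"
    and "z1 \<noteq> z2"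
  define d where "d = z2 - z1"
  have "norm d > 0"
    using \<open>z1 \<noteq> z2\<close> by (simp add: d_def)
  have derivs: "((\<lambda>z. H z - z) has_field_derivative deriv H z - 1) (at z within S)"
    "(G has_field_derivative deriv G z) (at z within S)" if "z \<in> S" for z
    using that S holG holH
    by (auto intro!: derivative_eq_intros holomorphic_derivI)
  define X where "X = (H z2 - z2) - (H z1 - z1)"
  define Y where "Y = cnj z2 * (G z2 - G z1)"
  define Z where "Z = cnj d * G z1"
  have "norm X \<le> A * norm d"
    unfolding X_def d_def by (rule field_differentiable_bound[OF S(1) derivs(1) dH z(2,1)])
  moreover have "norm Y \<le> \<rho> * (D * norm d)"
    unfolding Y_def norm_mult complex_mod_cnj d_def
    using norm_le[OF z(2)] field_differentiable_bound[OF S(1) derivs(2) dG z(2,1)]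
    by (intro mult_mono) (auto intro: order_trans[OF norm_ge_zero])
  moreover have "norm Z < E * norm d"
    using G[OF z(1)] \<open>norm d > 0\<close> by (simp add: Z_def norm_mult)
  moreover have "norm d \<le> norm X + norm Y + norm Z"
  proof -
    have "d = - (X + Y + Z)"
      using eq by (simp add: X_def Y_def Z_def d_def algebra_simps)
    then have "norm d = norm (X + Y + Z)"
      by (simp only: norm_minus_cancel)
    then show ?thesis
      using norm_triangle_ineq[of "X + Y" Z] norm_triangle_ineq[of X Y] by linarith
  qed
  ultimately have "norm d < A * norm d + \<rho> * (D * norm d) + E * norm d"
    by linarith
  also have "\<dots> = (A + \<rho> * D + E) * norm d"
    by (simp add: algebra_simps)
  also have "\<dots> \<le> norm d"
    using mult_right_mono[OF sum_le norm_ge_zero] by simp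
  finally show False by simp
qed

lemma inj_on_ball_cnj_mult_plus:
  fixes G H :: "complex \<Rightarrow> complex"
  assumes holG: "G holomorphic_on ball 0 1" and holH: "H holomorphic_on ball 0 1"
    and G0: "G 0 = 0" and dG0: "deriv G 0 = 1" and dH0: "deriv H 0 = 1"
    and coeffG: "\<And>n. n \<ge> 2 \<Longrightarrow> norm (taylor_coeff G n) \<le> \<mu>1"
    and coeffH: "\<And>n. n \<ge> 2 \<Longrightarrow> norm (taylor_coeff H n) \<le> \<mu>2"
    and \<rho>: "\<rho> < 1"
    and radius: "\<mu>2 * ((2 * \<rho> - \<rho>^2) / (1 - \<rho>)^2) + \<mu>1 * ((3 - 2 * \<rho>) * \<rho>^2 / (1 - \<rho>)^2)
                   + 2 * \<rho> \<le> 1"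
  shows "inj_on (\<lambda>z. cnj z * G z + H z) (ball 0 \<rho>)"
proof (rule inj_on_cnj_mult_plus)
  have sub: "ball 0 \<rho> \<subseteq> ball (0::complex) 1"
    using \<rho> by auto
  show "G holomorphic_on ball 0 \<rho>" "H holomorphic_on ball 0 \<rho>"
    using holG holH sub by (auto intro: holomorphic_on_subset)
  show "norm (deriv H z - 1) \<le> \<mu>2 * (1 / (1 - \<rho>)^2 - 1)" if "z \<in> ball 0 \<rho>" for z
    using norm_deriv_sub_1_le[OF holH dH0 coeffH _ \<rho>] that by simp
  show "norm (deriv G z) \<le> 1 + \<mu>1 * (1 / (1 - \<rho>)^2 - 1)" if "z \<in> ball 0 \<rho>" for z
    using norm_deriv_sub_1_le[OF holG dG0 coeffG _ \<rho>, of z] that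
      norm_triangle_ineq2[of "deriv G z" 1]
    by simp
  show "norm (G z) < \<rho> + \<mu>1 * (\<rho>^2 / (1 - \<rho>))" if "z \<in> ball 0 \<rho>" for z
    using norm_sub_id_le[OF holG G0 dG0 coeffG _ \<rho>, of z] that norm_triangle_ineq2[of "G z" z]
    by simp
  show "norm z \<le> \<rho>" if "z \<in> ball 0 \<rho>" for z
    using that by simp
  have eq: "\<mu>2 * (1 / (1 - \<rho>)^2 - 1) + \<rho> * (1 + \<mu>1 * (1 / (1 - \<rho>)^2 - 1))
              + (\<rho> + \<mu>1 * (\<rho>^2 / (1 - \<rho>)))
        = \<mu>2 * ((2 * \<rho> - \<rho>^2) / (1 - \<rho>)^2) + \<mu>1 * ((3 - 2 * \<rho>) * \<rho>^2 / (1 - \<rho>)^2)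
              + 2 * \<rho>"
    using \<rho> by (simp add: divide_simps) (simp add: algebra_simps power2_eq_square)
  show "\<mu>2 * (1 / (1 - \<rho>)^2 - 1) + \<rho> * (1 + \<mu>1 * (1 / (1 - \<rho>)^2 - 1))
          + (\<rho> + \<mu>1 * (\<rho>^2 / (1 - \<rho>))) \<le> 1"
    unfolding eq by (rule radius)
qed simp_all

lemma norm_cnj_mult_plus_ge:
  fixes G H :: "complex \<Rightarrow> complex"
  assumes holG: "G holomorphic_on ball 0 1" and holH: "H holomorphic_on ball 0 1"
    and G0: "G 0 = 0" and H0: "H 0 = 0" and dG0: "deriv G 0 = 1" and dH0: "deriv H 0 = 1"
    and coeffG: "\<And>n. n \<ge> 2 \<Longrightarrow> norm (taylor_coeff G n) \<le> \<mu>1"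
    and coeffH: "\<And>n. n \<ge> 2 \<Longrightarrow> norm (taylor_coeff H n) \<le> \<mu>2"
    and z: "norm z = \<rho>" and \<rho>: "\<rho> < 1"
  shows "\<rho> - \<rho>^2 - \<mu>2 * (\<rho>^2 / (1 - \<rho>)) - \<mu>1 * (\<rho>^3 / (1 - \<rho>)) \<le> norm (cnj z * G z + H z)"
proof -
  have "\<rho> - \<mu>2 * (\<rho>^2 / (1 - \<rho>)) \<le> norm (H z)"
    using norm_sub_id_le[OF holH H0 dH0 coeffH _ \<rho>, of z] z norm_triangle_ineq3[of "H z" z]
    by (simp add: norm_minus_commute)
  moreover have "norm (cnj z * G z) \<le> \<rho> * (\<rho> + \<mu>1 * (\<rho>^2 / (1 - \<rho>)))"
    using norm_sub_id_le[OF holG G0 dG0 coeffG _ \<rho>, of z] z norm_triangle_ineq2[of "G z" z]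
    by (auto simp: norm_mult intro!: mult_left_mono)
  moreover have "norm (H z) \<le> norm (cnj z * G z + H z) + norm (cnj z * G z)"
    using norm_triangle_ineq4[of "cnj z * G z + H z" "cnj z * G z"] by simp
  moreover have "\<rho> * (\<rho> + \<mu>1 * (\<rho>^2 / (1 - \<rho>))) = \<rho>^2 + \<mu>1 * (\<rho>^3 / (1 - \<rho>))"
    by (simp add: algebra_simps power2_eq_square power3_eq_cube)
  ultimately show ?thesis
    by linarith
qed

lemma ball_subset_image_if_sphere_far:
  fixes F :: "'a \<Rightarrow> 'a::euclidean_space"
  assumes "0 < r" and contF: "continuous_on (cball a r) F" and inj: "inj_on F (ball a r)"
    and far: "\<And>z. z \<in> sphere a r \<Longrightarrow> \<sigma> \<le> dist (F a) (F z)"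
  shows "ball (F a) \<sigma> \<subseteq> F ` ball a r"
proof (cases "\<sigma> > 0")
  case True
  define U where "U = F ` ball a r"
  define K where "K = F ` cball a r"
  have "open U"
    unfolding U_def using inj by (intro invariance_of_domain continuous_on_subset[OF contF]) auto
  moreover have "open (- K)"
    unfolding K_def
    by (intro open_Compl compact_imp_closed compact_continuous_image contF compact_cball)
  moreover have "U \<inter> - K \<inter> ball (F a) \<sigma> = {}"
    unfolding U_def K_def by auto
  moreover have cover: "ball (F a) \<sigma> \<subseteq> U \<union> - K"
  proof
    fix x assume x: "x \<in> ball (F a) \<sigma>"
    show "x \<in> U \<union> - K"
    proof (cases "x \<in> K")
      case True
      then obtain z where "z \<in> cball a r" "x = F z"
        unfolding K_def by auto
      moreover have "z \<notin> sphere a r"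
        using far[of z] x \<open>x = F z\<close> by auto
      ultimately show ?thesis
        unfolding U_def by auto
    qed simp
  qed
  ultimately have "U \<inter> ball (F a) \<sigma> = {} \<or> - K \<inter> ball (F a) \<sigma> = {}"
    by (rule connectedD[OF connected_ball])
  moreover have "F a \<in> U \<inter> ball (F a) \<sigma>"
    using True \<open>0 < r\<close> unfolding U_def by auto
  ultimately show ?thesis
    using cover unfolding U_def by blast
qed (simp add: ball_empty)

theorem theorem2p3:
  fixes G H :: "complex \<Rightarrow> complex" and M1 M2 \<rho>3 \<sigma>3 :: real
    and F :: "complex \<Rightarrow> complex"
  assumes "M1 > 0" and "M2 > 0"
    and "G holomorphic_on ball 0 1" and "H holomorphic_on ball 0 1"
    and "G 0 = 0" and "H 0 = 0"
    and "deriv G 0 = 1" and "deriv H 0 = 1"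
    and "\<And>z. z \<in> ball 0 1 \<Longrightarrow> norm (G z) \<le> M1"
    and "\<And>z. z \<in> ball 0 1 \<Longrightarrow> norm (H z) \<le> M2"
    and "\<And>z. F z = cnj z * G z + H z"
    and "0 < \<rho>3" and "\<rho>3 < 1"
    and "1 - (M2 - 1 / M2) * ((2 * \<rho>3 - \<rho>3^2) / (1 - \<rho>3)^2)
           - (M1 - 1 / M1) * ((3 - 2 * \<rho>3) * \<rho>3^2 / (1 - \<rho>3)^2) - 2 * \<rho>3 = 0"
    and "\<sigma>3 = \<rho>3 - \<rho>3^2 - (M2 - 1 / M2) * (\<rho>3^2 / (1 - \<rho>3))
                - (M1 - 1 / M1) * (\<rho>3^3 / (1 - \<rho>3))"
  shows "inj_on F (ball 0 \<rho>3) \<and> ball 0 \<sigma>3 \<subseteq> F ` ball 0 \<rho>3"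
proof
  note holG = assms(3) and holH = assms(4)
  have F: "F = (\<lambda>z. cnj z * G z + H z)"
    using assms(11) by blast
  have coeffG: "norm (taylor_coeff G n) \<le> M1 - 1 / M1" if "n \<ge> 2" for n
    by (rule norm_taylor_coeff_le[OF holG assms(5,7,9) that])
  have coeffH: "norm (taylor_coeff H n) \<le> M2 - 1 / M2" if "n \<ge> 2" for n
    by (rule norm_taylor_coeff_le[OF holH assms(6,8,10) that])
  show inj: "inj_on F (ball 0 \<rho>3)"
    unfolding F using assms(13,14)
    by (intro inj_on_ball_cnj_mult_plus[OF holG holH assms(5,7,8) coeffG coeffH]) auto
  have "continuous_on (cball 0 \<rho>3) F"
    unfolding F using assms(13)
    by (intro continuous_intros holomorphic_on_imp_continuous_on
        holomorphic_on_subset[OF holG] holomorphic_on_subset[OF holH]) auto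
  moreover have "\<sigma>3 \<le> dist (F 0) (F z)" if "z \<in> sphere 0 \<rho>3" for z
    using norm_cnj_mult_plus_ge[OF holG holH assms(5-8) coeffG coeffH _ assms(13), of z] that
    by (simp add: F assms(5,6,15))
  ultimately have "ball (F 0) \<sigma>3 \<subseteq> F ` ball 0 \<rho>3"
    using ball_subset_image_if_sphere_far[OF assms(12)] inj by blast
  then show "ball 0 \<sigma>3 \<subseteq> F ` ball 0 \<rho>3"
    by (simp add: F assms(5,6))
qed

end
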